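(* For any positive integer $n$ and any pair of non-negative integers $s,t$ with $s \geq t$, \[ \sum_{j=0}^{n} \frac{1}{\binom{n+s}{j+t}} \binom{n}{j} \;=\; \frac{s+1+n}{(s+1)\binom{s}{t}} . \] *)

theory Defs
  imports Complex_Main
begin

end

theory Submission
  imports Defs
begin

text \<open>Write \<open>n = j + m\<close> and \<open>s = t + u\<close>. Both \<open>C(n,j) C(s,t) C(n+s,n)\<close> and
  \<open>C(j+t,j) C(m+u,u) C(n+s,j+t)\<close> equal the multinomial coefficient \<open>(n+s)! / (j! m! t! u!)\<close>,
  so the summand is \<open>C(j+t,j) C(m+u,u) / (C(n+s,n) C(s,t))\<close>. Summing over \<open>j\<close>, the
  upper-negated Vandermonde convolution \<open>\<Sum>j\<le>n. C(t+j,j) C(u+n-j,u) = C(n+s+1,n)\<close> leaves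
  \<open>C(n+s+1,n) / (C(n+s,n) C(s,t))\<close>, and \<open>C(n+s+1,n) / C(n+s,n) = (n+s+1)/(s+1)\<close>.\<close>

lemma sum_choose_lower_convolution:
  "(\<Sum>k\<le>n. ((a + k) choose k) * ((b + (n - k)) choose b)) = Suc (a + b + n) choose n"
proof (induction b arbitrary: n)
  case 0
  then show ?case using sum_choose_lower[of a n] by simp
next
  case (Suc b)
  note IH_b = Suc.IH
  show ?case
  proof (induction n)
    case 0
    then show ?case by simp
  next
    case (Suc n)
    have "(\<Sum>k\<le>Suc n. ((a + k) choose k) * ((Suc b + (Suc n - k)) choose Suc b))
        = (\<Sum>k\<le>Suc n. ((a + k) choose k) * ((b + (Suc n - k)) choose b))
          + (\<Sum>k\<le>Suc n. ((a + k) choose k) * ((b + (Suc n - k)) choose Suc b))"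
      by (simp add: sum.distrib algebra_simps)
    also have "(\<Sum>k\<le>Suc n. ((a + k) choose k) * ((b + (Suc n - k)) choose b))
        = Suc (a + b + Suc n) choose Suc n"
      using IH_b .
    also have "(\<Sum>k\<le>Suc n. ((a + k) choose k) * ((b + (Suc n - k)) choose Suc b))
        = (\<Sum>k\<le>n. ((a + k) choose k) * ((Suc b + (n - k)) choose Suc b))"
      by (auto simp: Suc_diff_le intro!: sum.cong)
    also have "\<dots> = Suc (a + Suc b + n) choose n"
      using Suc.IH .
    finally show ?case by simp
  qed
qed

lemma choose_mult_choose_swap:
  "((j + m) choose j) * ((t + u) choose t) * ((j + m + t + u) choose (j + m))
     = ((j + t) choose j) * ((m + u) choose u) * ((j + m + t + u) choose (j + t))"
proof -
  have choose_fact: "real ((x + y) choose x) = fact (x + y) / (fact x * fact y)"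
    and choose_fact': "real ((x + y) choose y) = fact (x + y) / (fact x * fact y)" for x y :: nat
    using binomial_fact[of x "x + y"] binomial_fact[of y "x + y"] by (simp_all add: mult.commute)
  have "real ((j + m + t + u) choose (j + m)) = fact (j + m + t + u) / (fact (j + m) * fact (t + u))"
    using choose_fact[of "j + m" "t + u"] by (simp add: add.assoc)
  moreover have "real ((j + m + t + u) choose (j + t)) = fact (j + m + t + u) / (fact (j + t) * fact (m + u))"
    using choose_fact[of "j + t" "m + u"] by (simp add: algebra_simps)
  ultimately have "real (((j + m) choose j) * ((t + u) choose t) * ((j + m + t + u) choose (j + m)))
     = real (((j + t) choose j) * ((m + u) choose u) * ((j + m + t + u) choose (j + t)))"
    unfolding of_nat_mult choose_fact choose_fact' by (simp add: field_simps)
  then show ?thesis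
    by (simp only: of_nat_eq_iff)
qed

lemma choose_Suc_add_div_choose_add:
  "real (Suc (n + s) choose n) / real ((n + s) choose n) = real (Suc (n + s)) / real (Suc s)"
proof -
  have "Suc s * (Suc (n + s) choose n) = Suc (n + s) * ((n + s) choose n)"
    using binomial_absorb_comp[of "Suc (n + s)" n] by simp
  then have "real (Suc s) * real (Suc (n + s) choose n) = real (Suc (n + s)) * real ((n + s) choose n)"
    by (metis of_nat_mult)
  moreover have "real ((n + s) choose n) > 0"
    by simp
  ultimately show ?thesis
    by (simp add: field_simps)
qed

lemma choose_div_choose_add:
  fixes j n s t :: nat
  assumes "j \<le> n" and "t \<le> s"
  shows "real (n choose j) / real ((n + s) choose (j + t))
    = real ((t + j) choose j) * real (((s - t) + (n - j)) choose (s - t))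
      / (real ((n + s) choose n) * real (s choose t))"
proof -
  obtain m u where n: "n = j + m" and s: "s = t + u"
    using assms by (metis le_add_diff_inverse)
  have "(n choose j) * (s choose t) * ((n + s) choose n)
      = ((t + j) choose j) * (((s - t) + (n - j)) choose (s - t)) * ((n + s) choose (j + t))"
    using choose_mult_choose_swap[of j m t u]
    by (simp add: n s algebra_simps)
  then have "real (n choose j) * real (s choose t) * real ((n + s) choose n)
      = real ((t + j) choose j) * real (((s - t) + (n - j)) choose (s - t)) * real ((n + s) choose (j + t))"
    by (metis of_nat_mult)
  moreover have "real ((n + s) choose (j + t)) > 0" "real ((n + s) choose n) > 0" "real (s choose t) > 0"
    using assms by simp_all
  ultimately show ?thesis
    by (simp add: field_simps)
qed

theorem lemma1:
  fixes n s t :: nat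
  assumes "n \<ge> 1" and "s \<ge> t"
  shows "(\<Sum>j=0..n. (real (n choose j)) / real ((n + s) choose (j + t)))
           = real (s + 1 + n) / (real (s + 1) * real (s choose t))"
proof -
  have convolution: "(\<Sum>j\<le>n. ((t + j) choose j) * (((s - t) + (n - j)) choose (s - t)))
      = Suc (n + s) choose n"
    using sum_choose_lower_convolution[of t "s - t" n] assms(2) by (simp add: add.commute)
  have "(\<Sum>j=0..n. real (n choose j) / real ((n + s) choose (j + t)))
      = real (\<Sum>j\<le>n. ((t + j) choose j) * (((s - t) + (n - j)) choose (s - t)))
        / (real ((n + s) choose n) * real (s choose t))"
    using assms(2) by (simp add: atLeast0AtMost choose_div_choose_add sum_divide_distrib)
  also have "\<dots> = real (Suc (n + s) choose n) / (real ((n + s) choose n) * real (s choose t))"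
    unfolding convolution ..
  also have "\<dots> = real (Suc (n + s) choose n) / real ((n + s) choose n) / real (s choose t)"
    by (simp only: divide_divide_eq_left)
  also have "\<dots> = real (Suc (n + s)) / real (Suc s) / real (s choose t)"
    by (simp only: choose_Suc_add_div_choose_add)
  finally show ?thesis
    by (simp add: add.commute)
qed

end
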